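(* The $3\times2\times3$ quaternion tensor $$T=\left(\begin{bmatrix}1&0&0\\0&1&0\\0&0&1\end{bmatrix};\begin{bmatrix}0&0&1\\0&1&0\\0&0&0\end{bmatrix}\right)$$ has $\mathrm{rank}(T)=4$.
   Context: $\mathbb{H}$ denotes the real quaternions. An $n_1\times n_2\times n_3$ quaternion tensor is an array $T=(T_{ijk})$ with entries in $\mathbb{H}$, $1\le i\le n_1$, $1\le j\le n_2$, $1\le k\le n_3$; it is written $T=(A_1;\dots;A_{n_2})$ where the frontal slice $A_j$ is the $n_1\times n_3$ matrix $(T_{ijk})_{i,k}$. A nonzero tensor is simple if $T_{ijk}=a_ib_jc_k$ (quaternion product in this order) for some $\vec a\in\mathbb{H}^{n_1},\vec b\in\mathbb{H}^{n_2},\vec c\in\mathbb{H}^{n_3}$. The rank of $T$ is the least number of simple tensors summing to $T$. *)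

theory Defs
  imports Complex_Main
begin

datatype quat = Quat (qRe: real) (qI: real) (qJ: real) (qK: real)

lemma quat_eqI: "qRe x = qRe y \<Longrightarrow> qI x = qI y \<Longrightarrow> qJ x = qJ y \<Longrightarrow> qK x = qK y \<Longrightarrow> x = y"
  by (cases x; cases y) auto

instantiation quat :: ring_1
begin

definition "0 = Quat 0 0 0 0"
definition "1 = Quat 1 0 0 0"
definition "x + y = Quat (qRe x + qRe y) (qI x + qI y) (qJ x + qJ y) (qK x + qK y)"
definition "- x = Quat (- qRe x) (- qI x) (- qJ x) (- qK x)"
definition "x - y = Quat (qRe x - qRe y) (qI x - qI y) (qJ x - qJ y) (qK x - qK y)"
text \<open>Hamilton product, with i^2 = j^2 = k^2 = ijk = -1.\<close>
definition "x * y = Quat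
   (qRe x * qRe y - qI x * qI y - qJ x * qJ y - qK x * qK y)
   (qRe x * qI y + qI x * qRe y + qJ x * qK y - qK x * qJ y)
   (qRe x * qJ y - qI x * qK y + qJ x * qRe y + qK x * qI y)
   (qRe x * qK y + qI x * qJ y - qJ x * qI y + qK x * qRe y)"

instance
  by standard (auto intro!: quat_eqI simp: zero_quat_def one_quat_def plus_quat_def
      uminus_quat_def minus_quat_def times_quat_def algebra_simps)

end

text \<open>An n1 x n2 x n3 quaternion tensor is represented by a function T with T i j k
  the entry at position (i,j,k), indices 0-based (i < n1, j < n2, k < n3);
  values outside this range are irrelevant.\<close>

definition simple_tensor :: "nat \<Rightarrow> nat \<Rightarrow> nat \<Rightarrow> (nat \<Rightarrow> nat \<Rightarrow> nat \<Rightarrow> quat) \<Rightarrow> bool" where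
  "simple_tensor n1 n2 n3 S \<longleftrightarrow>
     (\<exists>i<n1. \<exists>j<n2. \<exists>k<n3. S i j k \<noteq> 0) \<and>
     (\<exists>a b c :: nat \<Rightarrow> quat. \<forall>i<n1. \<forall>j<n2. \<forall>k<n3. S i j k = a i * b j * c k)"

definition tensor_rank :: "nat \<Rightarrow> nat \<Rightarrow> nat \<Rightarrow> (nat \<Rightarrow> nat \<Rightarrow> nat \<Rightarrow> quat) \<Rightarrow> nat" where
  "tensor_rank n1 n2 n3 T = (LEAST r. \<exists>S :: nat \<Rightarrow> nat \<Rightarrow> nat \<Rightarrow> nat \<Rightarrow> quat.
      (\<forall>l<r. simple_tensor n1 n2 n3 (S l)) \<and>
      (\<forall>i<n1. \<forall>j<n2. \<forall>k<n3. T i j k = (\<Sum>l<r. S l i j k)))"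

text \<open>The tensor of the theorem: frontal slice j=0 is the 3x3 identity,
  frontal slice j=1 has ones at (row 1, col 3) and (row 2, col 2) (1-based).\<close>

definition T14 :: "nat \<Rightarrow> nat \<Rightarrow> nat \<Rightarrow> quat" where
  "T14 i j k = (if j = 0 then (if i = k then 1 else 0)
               else (if (i = 0 \<and> k = 2) \<or> (i = 1 \<and> k = 1) then 1 else 0))"

end

theory Submission
  imports Defs
begin

text \<open>
  Suppose the tensor is a sum of three triads \<open>a l \<otimes> b l \<otimes> c l\<close> over a division ring. For each
  \<open>l\<close> choose a nonzero covector \<open>u\<close> killing the other two vectors \<open>a l'\<close> (two left-linear conditions
  in three unknowns). Contracting the tensor with \<open>u\<close> leaves the single matrix
  \<open>(u \<cdot> a l) b l c l\<^sup>T\<close>: the identity slice makes \<open>u\<close> proportional to \<open>c l\<close>, so \<open>u\<close> is a left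
  eigenvector of the second slice, and this forces \<open>u\<close> to be supported on one of the last two
  coordinates. By pigeonhole the covectors chosen for two indices \<open>s \<noteq> t\<close> share that coordinate
  \<open>p\<close>. The one for \<open>t\<close> kills \<open>a s\<close>, so the \<open>p\<close>-th entry of \<open>a s\<close> vanishes and the one for \<open>s\<close> kills
  \<open>a s\<close> too; killing all three \<open>a l\<close>, it is zero by the identity slice. Hence the rank is at least
  4 over every division ring, and four triads suffice.
\<close>

instantiation quat :: division_ring
begin

definition inverse_quat :: "quat \<Rightarrow> quat" where
  "inverse q = (let s = inverse (qRe q ^ 2 + qI q ^ 2 + qJ q ^ 2 + qK q ^ 2) in
     Quat (qRe q * s) (- qI q * s) (- qJ q * s) (- qK q * s))"

definition divide_quat :: "quat \<Rightarrow> quat \<Rightarrow> quat" where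
  "divide_quat x y = x * inverse y"

instance
proof
  fix q :: quat
  assume "q \<noteq> 0"
  then have "qRe q ^ 2 + qI q ^ 2 + qJ q ^ 2 + qK q ^ 2 \<noteq> 0"
    by (auto intro!: quat_eqI simp: zero_quat_def add_nonneg_eq_0_iff)
  then have "(qRe q * qRe q + qI q * qI q + qJ q * qJ q + qK q * qK q) *
      inverse (qRe q ^ 2 + qI q ^ 2 + qJ q ^ 2 + qK q ^ 2) = 1"
    by (simp add: power2_eq_square)
  then show "inverse q * q = 1" "q * inverse q = 1"
    by (auto intro!: quat_eqI simp: inverse_quat_def times_quat_def one_quat_def Let_def
        algebra_simps)
qed (simp_all add: divide_quat_def inverse_quat_def zero_quat_def)

end

lemma exists_left_linear_dependence:
  fixes p q :: "'a::division_ring"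
  obtains s t where "s \<noteq> 0 \<or> t \<noteq> 0" and "s * p + t * q = 0"
proof (cases "p = 0")
  case True
  then show ?thesis using that[of 1 0] by simp
next
  case False
  then show ?thesis using that[of "- q * inverse p" 1] by (simp add: mult.assoc)
qed

lemma exists_common_left_annihilator:
  fixes x y :: "'i \<Rightarrow> 'a::division_ring"
  assumes "finite I" and "3 \<le> card I"
  obtains u where "\<exists>i\<in>I. u i \<noteq> 0" and "(\<Sum>i\<in>I. u i * x i) = 0" and "(\<Sum>i\<in>I. u i * y i) = 0"
proof -
  have pivot: "\<exists>u. (\<exists>i\<in>I. u i \<noteq> 0) \<and> (\<Sum>i\<in>I. u i * x i) = 0 \<and> (\<Sum>i\<in>I. u i * y i) = 0"
    if "i0 \<in> I" and "x i0 \<noteq> 0" for x y :: "'i \<Rightarrow> 'a" and i0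
  proof -
    have "2 \<le> card (I - {i0})" using assms \<open>i0 \<in> I\<close> by simp
    then obtain j1 j2 where j: "j1 \<in> I" "j2 \<in> I" "j1 \<noteq> i0" "j2 \<noteq> i0" "j1 \<noteq> j2"
      by (auto simp: numeral_2_eq_2 card_le_Suc_iff)
    define k where "k j i = (if i = j then 1 else 0) - (if i = i0 then x j * inverse (x i0) else 0)"
      for j i
    have k: "(\<Sum>i\<in>I. k j i * z i) = z j - x j * inverse (x i0) * z i0" if "j \<in> I" for j z
    proof -
      have "(if P then a else 0) * b = (if P then a * b else 0)" for P and a b :: 'a
        by simp
      then show ?thesis using assms(1) that \<open>i0 \<in> I\<close>
        by (simp add: k_def left_diff_distrib sum_subtractf mult.assoc)
    qed
    obtain s t where st: "s \<noteq> 0 \<or> t \<noteq> 0" "s * (\<Sum>i\<in>I. k j1 i * y i) + t * (\<Sum>i\<in>I. k j2 i * y i) = 0"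
      by (rule exists_left_linear_dependence)
    define u where "u i = s * k j1 i + t * k j2 i" for i
    have "(\<Sum>i\<in>I. u i * z i) = s * (\<Sum>i\<in>I. k j1 i * z i) + t * (\<Sum>i\<in>I. k j2 i * z i)" for z
      by (simp add: u_def algebra_simps sum.distrib sum_distrib_left)
    moreover have "u j1 = s" "u j2 = t" using j by (simp_all add: u_def k_def)
    ultimately show ?thesis
      using j st \<open>x i0 \<noteq> 0\<close> by (intro exI[of _ u]) (auto simp: k mult.assoc)
  qed
  consider i where "i \<in> I" "x i \<noteq> 0" | i where "i \<in> I" "y i \<noteq> 0" | "\<forall>i\<in>I. x i = 0 \<and> y i = 0"
    by blast
  then show ?thesis
  proof cases
    case 1
    then show ?thesis using pivot that by blast
  next
    case 2
    then show ?thesis using pivot[of _ y x] that by blast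
  next
    case 3
    obtain i where "i \<in> I" using assms by fastforce
    then show ?thesis using 3 that[of "\<lambda>_. 1"] by auto
  qed
qed

definition polyadic_decomp ::
  "nat \<Rightarrow> nat \<Rightarrow> nat \<Rightarrow> nat \<Rightarrow>
    (nat \<Rightarrow> nat \<Rightarrow> 'a) \<Rightarrow> (nat \<Rightarrow> nat \<Rightarrow> 'a) \<Rightarrow> (nat \<Rightarrow> nat \<Rightarrow> 'a) \<Rightarrow>
    (nat \<Rightarrow> nat \<Rightarrow> nat \<Rightarrow> 'a::semiring_0) \<Rightarrow> bool" where
  "polyadic_decomp n1 n2 n3 r a b c T \<longleftrightarrow>
     (\<forall>i<n1. \<forall>j<n2. \<forall>k<n3. T i j k = (\<Sum>l<r. a l i * b l j * c l k))"

lemma polyadic_decomp_pad: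
  assumes "polyadic_decomp n1 n2 n3 r a b c T" and "r \<le> r'"
  shows "polyadic_decomp n1 n2 n3 r' (\<lambda>l. if l < r then a l else (\<lambda>_. 0)) b c T"
  unfolding polyadic_decomp_def
proof (intro allI impI)
  fix i j k assume ijk: "i < n1" "j < n2" "k < n3"
  have "(\<Sum>l<r'. (if l < r then a l else (\<lambda>_. 0)) i * b l j * c l k) = (\<Sum>l<r. a l i * b l j * c l k)"
    using \<open>r \<le> r'\<close> by (subst sum.mono_neutral_right[of "{..<r'}" "{..<r}"]) auto
  then show "T i j k = (\<Sum>l<r'. (if l < r then a l else (\<lambda>_. 0)) i * b l j * c l k)"
    using assms(1) ijk by (simp add: polyadic_decomp_def)
qed

lemma polyadic_decomp_contract:
  assumes "polyadic_decomp n1 n2 n3 r a b c T" and "j < n2" and "k < n3"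
  shows "(\<Sum>i<n1. u i * T i j k) = (\<Sum>l<r. (\<Sum>i<n1. u i * a l i) * b l j * c l k)"
  using assms
  by (simp add: polyadic_decomp_def sum_distrib_left sum_distrib_right mult.assoc sum.swap[of _ "{..<n1}"])

lemma tensor_rank_eqI:
  assumes "polyadic_decomp n1 n2 n3 r a b c T"
    and "\<forall>l<r. \<exists>i<n1. \<exists>j<n2. \<exists>k<n3. a l i * b l j * c l k \<noteq> 0"
    and "\<And>r' a' b' c'. polyadic_decomp n1 n2 n3 r' a' b' c' T \<Longrightarrow> r \<le> r'"
  shows "tensor_rank n1 n2 n3 T = r"
  unfolding tensor_rank_def
proof (rule Least_equality, goal_cases)
  case 1
  show ?case
    using assms(1,2) unfolding simple_tensor_def polyadic_decomp_def
    by (intro exI[of _ "\<lambda>l i j k. a l i * b l j * c l k"]) blast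
next
  case (2 r')
  then obtain S where S: "\<forall>l<r'. simple_tensor n1 n2 n3 (S l)"
    and T: "\<forall>i<n1. \<forall>j<n2. \<forall>k<n3. T i j k = (\<Sum>l<r'. S l i j k)"
    by blast
  have "\<forall>l<r'. \<exists>abc. \<forall>i<n1. \<forall>j<n2. \<forall>k<n3.
      S l i j k = fst abc i * fst (snd abc) j * snd (snd abc) k"
    using S unfolding simple_tensor_def by fastforce
  then obtain abc :: "nat \<Rightarrow> (nat \<Rightarrow> quat) \<times> (nat \<Rightarrow> quat) \<times> (nat \<Rightarrow> quat)"
    where "\<forall>l<r'. \<forall>i<n1. \<forall>j<n2. \<forall>k<n3.
      S l i j k = fst (abc l) i * fst (snd (abc l)) j * snd (snd (abc l)) k"
    by metis
  then have "polyadic_decomp n1 n2 n3 r' (fst \<circ> abc) (fst \<circ> snd \<circ> abc) (snd \<circ> snd \<circ> abc) T"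
    using T by (simp add: polyadic_decomp_def)
  then show "r \<le> r'" by (rule assms(3))
qed

definition tensor14 :: "nat \<Rightarrow> nat \<Rightarrow> nat \<Rightarrow> 'a::zero_neq_one" where
  "tensor14 i j k = (if j = 0 then (if i = k then 1 else 0)
     else (if (i = 0 \<and> k = 2) \<or> (i = 1 \<and> k = 1) then 1 else 0))"

lemma T14_eq_tensor14: "T14 = tensor14"
  by (simp add: fun_eq_iff T14_def tensor14_def)

lemma tensor14_contract_slice0:
  fixes u :: "nat \<Rightarrow> 'a::semiring_1"
  assumes "k < 3"
  shows "(\<Sum>i<3. u i * tensor14 i 0 k) = u k"
  using assms by (auto simp: tensor14_def eval_nat_numeral less_Suc_eq)

lemma tensor14_contract_slice1:
  fixes u :: "nat \<Rightarrow> 'a::semiring_1"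
  shows "(\<Sum>i<3. u i * tensor14 i 1 k) = (if k = 1 then u 1 else if k = 2 then u 0 else 0)"
  by (simp add: tensor14_def eval_nat_numeral)

lemma tensor14_annihilator_eq_0:
  fixes a b c :: "nat \<Rightarrow> nat \<Rightarrow> 'a::semiring_1"
  assumes "polyadic_decomp 3 2 3 r a b c tensor14"
    and "\<forall>l<r. (\<Sum>i<3. u i * a l i) = 0" and "k < 3"
  shows "u k = 0"
  using polyadic_decomp_contract[OF assms(1), of 0 k u] assms(2,3)
  by (simp add: tensor14_contract_slice0)

lemma tensor14_separating_covector_supp:
  fixes a b c :: "nat \<Rightarrow> nat \<Rightarrow> 'a::division_ring"
  assumes D: "polyadic_decomp 3 2 3 r a b c tensor14" and "l < r"
    and ann: "\<forall>l'<r. l' \<noteq> l \<longrightarrow> (\<Sum>i<3. u i * a l' i) = 0" and "\<exists>i<3. u i \<noteq> 0"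
  shows "u 0 = 0 \<and> (u 1 = 0 \<or> u 2 = 0)"
proof -
  define \<alpha> where "\<alpha> = (\<Sum>i<3. u i * a l i)"
  have E: "(\<Sum>i<3. u i * tensor14 i j k) = \<alpha> * b l j * c l k" if "j < 2" "k < 3" for j k
  proof -
    have "(\<Sum>i<3. u i * tensor14 i j k) = (\<Sum>l'<r. (\<Sum>i<3. u i * a l' i) * b l' j * c l' k)"
      by (rule polyadic_decomp_contract[OF D that])
    also have "\<dots> = (\<Sum>l'\<in>{l}. (\<Sum>i<3. u i * a l' i) * b l' j * c l' k)"
      by (rule sum.mono_neutral_right) (use ann \<open>l < r\<close> in auto)
    finally show ?thesis by (simp add: \<alpha>_def)
  qed
  define p q where "p = \<alpha> * b l 0" and "q = \<alpha> * b l 1"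
  have slice0: "u k = p * c l k" if "k < 3" for k
    using E[of 0 k] that by (simp add: tensor14_contract_slice0 p_def)
  have slice1: "0 = q * c l 0" "u 1 = q * c l 1" "u 0 = q * c l 2"
    using E[of 1 0] E[of 1 1] E[of 1 2] unfolding tensor14_contract_slice1 q_def by simp_all
  have "p \<noteq> 0" using slice0 \<open>\<exists>i<3. u i \<noteq> 0\<close> by auto
  then have c: "c l k = inverse p * u k" if "k < 3" for k
    using slice0[OF that] by (simp add: mult.assoc[symmetric])
  define m where "m = q * inverse p"
  \<comment> \<open>\<open>u\<close> is a left eigenvector of the second slice, with eigenvalue \<open>m\<close>\<close>
  have "0 = m * u 0" "u 1 = m * u 1" "u 0 = m * u 2"
    using slice1 c by (simp_all add: m_def mult.assoc)
  then show ?thesis by (cases "m = 0") auto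
qed

lemma tensor14_no_polyadic_decomp_3:
  fixes a b c :: "nat \<Rightarrow> nat \<Rightarrow> 'a::division_ring"
  shows "\<not> polyadic_decomp 3 2 3 3 a b c tensor14"
proof
  assume D: "polyadic_decomp 3 2 3 3 a b c tensor14"
  define separating where "separating l u \<longleftrightarrow>
    (\<exists>i<3. u i \<noteq> 0) \<and> (\<forall>l'<3. l' \<noteq> l \<longrightarrow> (\<Sum>i<3. u i * a l' i) = 0)" for l u
  have "\<exists>u. l < 3 \<longrightarrow> separating l u" for l
  proof -
    obtain u where "\<exists>i\<in>{..<3}. u i \<noteq> 0"
      "(\<Sum>i<3. u i * a ((l + 1) mod 3) i) = 0" "(\<Sum>i<3. u i * a ((l + 2) mod 3) i) = 0"
      by (rule exists_common_left_annihilator[where I = "{..<3}"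
          and x = "a ((l + 1) mod 3)" and y = "a ((l + 2) mod 3)"]) auto
    moreover have "l' = (l + 1) mod 3 \<or> l' = (l + 2) mod 3" if "l < 3" "l' < 3" "l' \<noteq> l" for l'
      using that by presburger
    ultimately show ?thesis by (auto simp: separating_def)
  qed
  then obtain U where "\<And>l. l < 3 \<Longrightarrow> separating l (U l)"
    by (metis choice)
  then have U: "\<And>l. l < 3 \<Longrightarrow> \<exists>i<3. U l i \<noteq> 0"
    "\<And>l l'. l < 3 \<Longrightarrow> l' < 3 \<Longrightarrow> l' \<noteq> l \<Longrightarrow> (\<Sum>i<3. U l i * a l' i) = 0"
    by (auto simp: separating_def)
  define p where "p l = (if U l 1 = 0 then 2 else 1 :: nat)" for l
  have supp: "(\<Sum>i<3. U l i * x i) = U l (p l) * x (p l)" "U l (p l) \<noteq> 0" if "l < 3" for l x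
  proof -
    have "U l 0 = 0 \<and> (U l 1 = 0 \<or> U l 2 = 0)"
      using tensor14_separating_covector_supp[OF D that] U that by blast
    then show "(\<Sum>i<3. U l i * x i) = U l (p l) * x (p l)" "U l (p l) \<noteq> 0"
      using U(1)[OF that] by (auto simp: p_def eval_nat_numeral less_Suc_eq)
  qed
  have "card (p ` {..<3}) \<le> card {1, 2 :: nat}"
    by (rule card_mono) (auto simp: p_def)
  then have "\<not> inj_on p {..<3}"
    by (intro pigeonhole) simp
  then obtain s t where st: "s < 3" "t < 3" "s \<noteq> t" "p s = p t"
    by (auto simp: inj_on_def)
  have "U t (p t) * a s (p t) = 0" using U(2)[of t s] supp[of t] st by simp
  then have "\<forall>l<3. (\<Sum>i<3. U s i * a l i) = 0"
    using U(2)[of s] supp st by auto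
  then show False
    using tensor14_annihilator_eq_0[OF D] U(1)[of s] st by blast
qed

lemma tensor14_polyadic_decomp_length:
  fixes a b c :: "nat \<Rightarrow> nat \<Rightarrow> 'a::division_ring"
  assumes "polyadic_decomp 3 2 3 r a b c tensor14"
  shows "4 \<le> r"
  using polyadic_decomp_pad[OF assms, of 3] tensor14_no_polyadic_decomp_3 by force

lemma tensor14_polyadic_decomp_4:
  obtains a b c :: "nat \<Rightarrow> nat \<Rightarrow> 'a::semiring_1"
  where "polyadic_decomp 3 2 3 4 a b c tensor14"
    and "\<forall>l<4. \<exists>i<3. \<exists>j<2. \<exists>k<3. a l i * b l j * c l k \<noteq> 0"
proof -
  \<comment> \<open>\<open>e\<^sub>0\<otimes>e\<^sub>0\<otimes>e\<^sub>0 + e\<^sub>2\<otimes>e\<^sub>0\<otimes>e\<^sub>2 + e\<^sub>0\<otimes>e\<^sub>1\<otimes>e\<^sub>2 + e\<^sub>1\<otimes>(e\<^sub>0 + e\<^sub>1)\<otimes>e\<^sub>1\<close>\<close>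
  define a b c :: "nat \<Rightarrow> nat \<Rightarrow> 'a" where
    "a l i = of_bool (i = [0, 2, 0, 1] ! l)" and
    "b l j = of_bool (j = 0 \<and> l \<noteq> 2 \<or> j = 1 \<and> 2 \<le> l)" and
    "c l k = of_bool (k = [0, 2, 2, 1] ! l)" for l i j k
  have "polyadic_decomp 3 2 3 4 a b c tensor14"
    by (auto simp: polyadic_decomp_def tensor14_def a_def b_def c_def eval_nat_numeral less_Suc_eq)
  moreover have "\<forall>l<4. \<exists>i<3. \<exists>j<2. \<exists>k<3. a l i * b l j * c l k \<noteq> 0"
    by (auto simp: a_def b_def c_def eval_nat_numeral less_Suc_eq)
  ultimately show ?thesis by (rule that)
qed

theorem mainTheorem14:
  shows "tensor_rank 3 2 3 T14 = 4"
proof -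
  obtain a b c :: "nat \<Rightarrow> nat \<Rightarrow> quat" where "polyadic_decomp 3 2 3 4 a b c tensor14"
    and "\<forall>l<4. \<exists>i<3. \<exists>j<2. \<exists>k<3. a l i * b l j * c l k \<noteq> 0"
    by (rule tensor14_polyadic_decomp_4)
  then show ?thesis
    unfolding T14_eq_tensor14 by (rule tensor_rank_eqI) (rule tensor14_polyadic_decomp_length)
qed

end
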